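(* Consider the resilient constrained consensus algorithm described in the context, with at most $f$ Byzantine agents. Suppose $\bigcap_{i\in\mathcal H}\mathcal X_i=\{x^*\}$ and the set of normal agents $\mathcal H$ is $k$-redundant. Suppose $\mu>0$ is such that for every $x\in\mathbb R^m$ and every $\mathcal S\subseteq\mathcal H$ with $|\mathcal S|\ge n-k$, $$\max_{i\in\mathcal S}\mathrm{dist}(x,\mathcal X_i)\ge\mu\,\mathrm{dist}\Big(x,\bigcap_{i\in\mathcal S}\mathcal X_i\Big).$$ If $k>\frac{4f}{\mu^2}+(2f-1)$, then at every time $t$ $$\sum_{i\in\mathcal H}\phi_i(t)\ge\Big(\frac{\mu^2}{2}k-\frac{4f+2f\mu^2-\mu^2}{2}\Big)V(t).$$
   Context: Setting: There are $n$ agents $\mathcal N=\{1,\dots,n\}$ on a complete communication graph. A known integer $f\ge0$ is given. The agents are partitioned into normal agents $\mathcal H$ and Byzantine agents $\mathcal F$ with $|\mathcal F|\le f$. Each $i\in\mathcal H$ has a closed convex $\mathcal X_i\subseteq\mathbb R^m$. Each normal agent's state is constrained to lie in $\mathcal X_i$; in particular $x_i(0)\in\mathcal X_i$. Algorithm: normal agent $i$ has state $x_i(t)\in\mathbb R^m$ and at time $t$ receives $x_{ji}(t)$ from each $j\ne i$. If $j\in\mathcal H$, then $x_{ji}(t)=x_j(t)$. If $j\in\mathcal F$, the value is arbitrary and may differ per recipient. Agent $i$ discards the $f$ received vectors with largest $\|x_i(t)-x_{ji}(t)\|$, with ties broken arbitrarily. The remaining $n-f-1$ senders form $\mathcal M_i(t)$.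 The update is $$x_i(t+1)=\mathrm P_{\mathcal X_i}\Big[x_i(t)+\alpha\sum_{j\in\mathcal M_i(t)}(x_{ji}(t)-x_i(t))\Big],$$ with $\alpha>0$ and $\mathrm P_{\mathcal C}$ the Euclidean projection. Notation: - $\mathrm{dist}(x,\mathcal C)=\|x-\mathrm P_{\mathcal C}[x]\|$; - $\phi_i(t)=\big\langle x_i(t)-x^*,\sum_{j\in\mathcal M_i(t)}(x_i(t)-x_{ji}(t))\big\rangle$; - $V(t)=\sum_{i\in\mathcal H}\|x_i(t)-x^*\|^2$; - $\mathcal H$ is $k$-redundant if for every $\mathcal S\subseteq\mathcal H$ with $|\mathcal S|\ge n-k$ we have $\bigcap_{i\in\mathcal S}\mathcal X_i=\bigcap_{i\in\mathcal H}\mathcal X_i$. *)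

theory Defs
  imports "HOL-Analysis.Analysis"
begin

text \<open>Agents are indexed by {1..n}. Euclidean projection onto a closed convex set is
  the library's closest_point; the distance to a set is infdist.\<close>

definition proj :: "'a::euclidean_space set \<Rightarrow> 'a \<Rightarrow> 'a" where
  "proj C x = closest_point C x"

definition k_redundant :: "nat \<Rightarrow> nat set \<Rightarrow> (nat \<Rightarrow> 'a set) \<Rightarrow> nat \<Rightarrow> bool" where
  "k_redundant n H X k \<longleftrightarrow>
     (\<forall>S. S \<subseteq> H \<and> card S \<ge> n - k \<longrightarrow> (\<Inter>i\<in>S. X i) = (\<Inter>i\<in>H. X i))"

text \<open>M is a valid trimmed set for agent i: obtained from the senders N-{i} by discarding
  exactly f received vectors with largest distance to the own state (ties arbitrary).\<close>
definition trimmed_set ::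
  "nat \<Rightarrow> nat \<Rightarrow> nat \<Rightarrow> 'a::real_normed_vector \<Rightarrow> (nat \<Rightarrow> 'a) \<Rightarrow> nat set \<Rightarrow> bool" where
  "trimmed_set n f i xi recv M \<longleftrightarrow>
     M \<subseteq> {1..n} - {i} \<and> card (({1..n} - {i}) - M) = f \<and>
     (\<forall>j\<in>M. \<forall>j'\<in>({1..n} - {i}) - M. norm (xi - recv j) \<le> norm (xi - recv j'))"

definition phi :: "'a::real_inner \<Rightarrow> 'a \<Rightarrow> (nat \<Rightarrow> 'a) \<Rightarrow> nat set \<Rightarrow> real" where
  "phi xstar xi recv M = inner (xi - xstar) (\<Sum>j\<in>M. xi - recv j)"

definition Vfun :: "'a::real_inner \<Rightarrow> nat set \<Rightarrow> (nat \<Rightarrow> 'a) \<Rightarrow> real" where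
  "Vfun xstar H xs = (\<Sum>i\<in>H. (norm (xs i - xstar))^2)"

end

theory Submission
  imports Defs
begin

(* Write e_j = x_j - x*. For a kept normal neighbour j,
   <e_i, e_i - e_j> = |e_i - e_j|^2/2 + (|e_i|^2 - |e_j|^2)/2, and the second parts cancel
   when summed over all pairs of normal agents. By k-redundancy and the mu-condition, fewer
   than n - k normal states lie within mu |e_i| of x_i (otherwise they would place x_i within
   less than mu |e_i| of each of their constraint sets, whose intersection is {x*}); so at
   least k + 1 - 2f kept normal neighbours contribute at least mu^2 |e_i|^2/2 each. A kept
   Byzantine value is no farther from x_i than any discarded normal state, and there are at
   most as many kept Byzantine values as discarded normal states; this bounds their total
   effect, together with the discarded normal terms, by 2f |e_i|^2. *)

lemma inner_diff_eq_half_norms: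
  fixes u v :: "'a::real_inner"
  shows "inner u (u - v) = (norm (u - v))\<^sup>2 / 2 + ((norm u)\<^sup>2 / 2 - (norm v)\<^sup>2 / 2)"
  by (simp add: power2_norm_eq_inner inner_diff_left inner_diff_right inner_commute field_simps)

lemma sum_sum_diff_eq_zero:
  fixes g :: "'b \<Rightarrow> 'c::ab_group_add"
  shows "(\<Sum>i\<in>A. \<Sum>j\<in>A. g i - g j) = 0"
  by (simp add: sum_subtractf sum.swap[of "\<lambda>i j. g j"])

lemma card_mult_power2_le_sum_power2:
  fixes d :: "'b \<Rightarrow> real"
  assumes "finite A" and "0 \<le> c"
  shows "real (card {j\<in>A. c \<le> d j}) * c\<^sup>2 \<le> (\<Sum>j\<in>A. (d j)\<^sup>2)"
proof -
  have "real (card {j\<in>A. c \<le> d j}) * c\<^sup>2 = (\<Sum>j\<in>{j\<in>A. c \<le> d j}. c\<^sup>2)"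
    by simp
  also have "\<dots> \<le> (\<Sum>j\<in>{j\<in>A. c \<le> d j}. (d j)\<^sup>2)"
    using \<open>0 \<le> c\<close> by (intro sum_mono power_mono) auto
  also have "\<dots> \<le> (\<Sum>j\<in>A. (d j)\<^sup>2)"
    using \<open>finite A\<close> by (intro sum_mono2) auto
  finally show ?thesis .
qed

lemma card_Diff_le_card_Int_if_disjoint:
  assumes "finite A" "finite B" "A \<inter> B = {}" "card ((A \<union> B) - H) \<le> card B"
  shows "card (A - H) \<le> card (B \<inter> H)"
proof -
  have "card (A - H) + card (B - H) = card ((A \<union> B) - H)"
    using assms(1-3) by (subst card_Un_disjoint[symmetric]) (auto intro: arg_cong[where f = card])
  also have "\<dots> \<le> card (B \<inter> H) + card (B - H)"
    using assms(2,4) card_Int_Diff[of B H] by simp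
  finally show ?thesis by simp
qed

lemma byzantine_terms_lower_bound:
  fixes u :: "'a::real_inner" and d v :: "'b \<Rightarrow> 'a"
  assumes "finite B" "finite D" "card B \<le> card D"
    and dominated: "\<forall>j\<in>B. \<forall>l\<in>D. norm (d j) \<le> norm (u - v l)"
  shows "- 2 * real (card D) * (norm u)\<^sup>2
    \<le> (\<Sum>j\<in>B. inner u (d j)) - (\<Sum>l\<in>D. (norm u)\<^sup>2 / 2 - (norm (v l))\<^sup>2 / 2)"
proof (cases "D = {}")
  case True
  then show ?thesis using assms(1,3) by simp
next
  case False
  define a where "a = norm u"
  obtain l0 where "l0 \<in> D" and l0_min: "\<And>l. l \<in> D \<Longrightarrow> norm (v l0) \<le> norm (v l)"
    using arg_min_if_finite(1)[OF \<open>finite D\<close> False, where f = "\<lambda>l. norm (v l)"]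
      arg_min_least[OF \<open>finite D\<close> False, where f = "\<lambda>l. norm (v l)"] by blast
  define m where "m = norm (v l0)"
  have "- (a * (a + m)) \<le> inner u (d j)" if "j \<in> B" for j
  proof -
    have "norm (d j) \<le> a + m"
      using dominated that \<open>l0 \<in> D\<close> norm_triangle_ineq4[of u "v l0"]
      unfolding a_def m_def by force
    have "\<bar>inner u (d j)\<bar> \<le> a * norm (d j)"
      unfolding a_def by (rule Cauchy_Schwarz_ineq2)
    also have "\<dots> \<le> a * (a + m)"
      using \<open>norm (d j) \<le> a + m\<close> by (rule mult_left_mono) (simp add: a_def)
    finally show ?thesis by linarith
  qed
  then have byz: "- (real (card B) * (a * (a + m))) \<le> (\<Sum>j\<in>B. inner u (d j))"
    using sum_mono[of B "\<lambda>_. - (a * (a + m))"] by simp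
  have "(norm (v l))\<^sup>2 \<ge> m\<^sup>2" if "l \<in> D" for l
    using l0_min[OF that] unfolding m_def by (simp add: power_mono)
  then have normal: "(\<Sum>l\<in>D. (norm u)\<^sup>2 / 2 - (norm (v l))\<^sup>2 / 2) \<le> real (card D) * ((a\<^sup>2 - m\<^sup>2) / 2)"
    using sum_mono[of D "\<lambda>l. (norm u)\<^sup>2 / 2 - (norm (v l))\<^sup>2 / 2" "\<lambda>_. (a\<^sup>2 - m\<^sup>2) / 2"]
    unfolding a_def by simp
  have "real (card B) * (a * (a + m)) \<le> real (card D) * (a * (a + m))"
    using \<open>card B \<le> card D\<close> unfolding a_def m_def by (intro mult_right_mono) auto
  moreover have "a * m \<le> (a\<^sup>2 + m\<^sup>2) / 2"
    using sum_squares_bound[of a m] by (simp add: power2_diff)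
  ultimately show ?thesis
    using byz normal mult_left_mono[of "a * m" "(a\<^sup>2 + m\<^sup>2) / 2" "real (card D)"]
    unfolding a_def[symmetric] by (simp add: algebra_simps power2_eq_square)
qed

lemma far_terms_lower_bound:
  fixes xs :: "nat \<Rightarrow> 'a::real_normed_vector" and r :: "nat \<Rightarrow> 'a"
  assumes H_sub: "H \<subseteq> {1..n}" and F_card: "card ({1..n} - H) \<le> f" and "i \<in> H"
    and trim: "trimmed_set n f i (xs i) r Mi"
    and near: "card {j\<in>H. norm (xs i - xs j) < \<mu> * norm (xs i - xstar)} < n - k"
    and "\<mu> > 0"
  shows "\<mu>\<^sup>2 * (real k + 1 - 2 * real f) * (norm (xs i - xstar))\<^sup>2
    \<le> (\<Sum>j\<in>Mi \<inter> H. (norm (xs i - xs j))\<^sup>2)"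
proof -
  define c where "c = \<mu> * norm (xs i - xstar)"
  have "c \<ge> 0" using \<open>\<mu> > 0\<close> unfolding c_def by simp
  show ?thesis
  proof (cases "c = 0")
    case True
    then have "norm (xs i - xstar) = 0" using \<open>\<mu> > 0\<close> unfolding c_def by simp
    then show ?thesis by (simp add: sum_nonneg)
  next
    case False
    define Near where "Near = {j\<in>H. norm (xs i - xs j) < c}"
    define Far where "Far = {j\<in>Mi \<inter> H. c \<le> norm (xs i - xs j)}"
    define R where "R = ({1..n} - {i}) - Mi"
    have "finite H" using H_sub finite_subset by blast
    have Far_eq: "Far = (H - Near) \<inter> Mi" unfolding Far_def Near_def by auto
    have "card R = f" and "Mi \<subseteq> {1..n} - {i}"
      using trim unfolding trimmed_set_def R_def by auto
    (* i is never kept, but c > 0 puts it into Near, so a far agent outside Mi was discarded *)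
    have "i \<in> Near" using \<open>i \<in> H\<close> \<open>c \<ge> 0\<close> False unfolding Near_def by simp
    then have "(H - Near) - Mi \<subseteq> R" using H_sub unfolding R_def by auto
    then have "card ((H - Near) - Mi) \<le> f"
      using card_mono[of R] \<open>card R = f\<close> unfolding R_def by force
    moreover have "card (H - Near) = card Far + card ((H - Near) - Mi)"
      using \<open>finite H\<close> Far_eq by (simp add: card_Int_Diff)
    moreover have "card (H - Near) = card H - card Near"
      using \<open>finite H\<close> by (intro card_Diff_subset) (auto simp: Near_def)
    moreover have "card Near \<le> card H"
      using \<open>finite H\<close> by (intro card_mono) (auto simp: Near_def)
    moreover have "n \<le> card H + f"
      using F_card card_Diff_subset[of H "{1..n}"] card_mono[of "{1..n}" H] H_sub \<open>finite H\<close>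
      by simp
    ultimately have "k + 1 \<le> card Far + 2 * f"
      using near unfolding Near_def c_def by linarith
    then have card_Far: "real k + 1 - 2 * real f \<le> real (card Far)"
      by linarith
    have "\<mu>\<^sup>2 * (real k + 1 - 2 * real f) * (norm (xs i - xstar))\<^sup>2
        = (real k + 1 - 2 * real f) * c\<^sup>2"
      unfolding c_def by (simp add: power_mult_distrib)
    also have "\<dots> \<le> real (card Far) * c\<^sup>2"
      using card_Far by (rule mult_right_mono) simp
    also have "\<dots> \<le> (\<Sum>j\<in>Mi \<inter> H. (norm (xs i - xs j))\<^sup>2)"
      using trim \<open>c \<ge> 0\<close> unfolding trimmed_set_def Far_def
      by (intro card_mult_power2_le_sum_power2) (auto intro: finite_subset)
    finally show ?thesis .
  qed
qed

lemma phi_lower_bound: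
  fixes xs r :: "nat \<Rightarrow> 'a::real_inner"
  assumes H_sub: "H \<subseteq> {1..n}" and F_card: "card ({1..n} - H) \<le> f" and "i \<in> H"
    and r_normal: "\<forall>j\<in>H. j \<noteq> i \<longrightarrow> r j = xs j"
    and trim: "trimmed_set n f i (xs i) r Mi"
    and near: "card {j\<in>H. norm (xs i - xs j) < \<mu> * norm (xs i - xstar)} < n - k"
    and "\<mu> > 0"
  shows "(\<Sum>j\<in>H. (norm (xs i - xstar))\<^sup>2 / 2 - (norm (xs j - xstar))\<^sup>2 / 2)
      + (\<mu>\<^sup>2 / 2 * (real k + 1 - 2 * real f) - 2 * real f) * (norm (xs i - xstar))\<^sup>2
    \<le> phi xstar (xs i) r Mi"
proof -
  define e where "e j = xs j - xstar" for j
  define g where "g j = (norm (e i))\<^sup>2 / 2 - (norm (e j))\<^sup>2 / 2" for j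
  define R where "R = ({1..n} - {i}) - Mi"
  have Mi_sub: "Mi \<subseteq> {1..n} - {i}" and "card R = f"
    and dominated: "\<forall>j\<in>Mi. \<forall>l\<in>R. norm (xs i - r j) \<le> norm (xs i - r l)"
    using trim unfolding trimmed_set_def R_def by auto
  have "finite Mi" using Mi_sub by (rule finite_subset) simp
  have "finite R" "finite H" using H_sub finite_subset unfolding R_def by auto
  have r_eq: "r j = xs j" if "j \<in> Mi \<union> R" "j \<in> H" for j
    using r_normal that Mi_sub unfolding R_def by auto
  have "phi xstar (xs i) r Mi = (\<Sum>j\<in>Mi. inner (e i) (xs i - r j))"
    unfolding phi_def e_def by (simp add: inner_sum_right)
  also have "\<dots> = (\<Sum>j\<in>Mi \<inter> H. inner (e i) (xs i - r j))
      + (\<Sum>j\<in>Mi - H. inner (e i) (xs i - r j))"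
    using \<open>finite Mi\<close> by (rule sum.Int_Diff)
  also have "(\<Sum>j\<in>Mi \<inter> H. inner (e i) (xs i - r j)) = (\<Sum>j\<in>Mi \<inter> H. inner (e i) (e i - e j))"
    using r_eq by (intro sum.cong) (auto simp: e_def)
  also have "\<dots> = (\<Sum>j\<in>Mi \<inter> H. (norm (xs i - xs j))\<^sup>2) / 2 + (\<Sum>j\<in>Mi \<inter> H. g j)"
    unfolding inner_diff_eq_half_norms g_def e_def
    by (simp add: sum.distrib sum_divide_distrib)
  finally have phi_eq: "phi xstar (xs i) r Mi = (\<Sum>j\<in>Mi \<inter> H. (norm (xs i - xs j))\<^sup>2) / 2
      + (\<Sum>j\<in>Mi \<inter> H. g j) + (\<Sum>j\<in>Mi - H. inner (e i) (xs i - r j))" .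
  have "H - Mi = insert i (R \<inter> H)"
    using H_sub \<open>i \<in> H\<close> Mi_sub unfolding R_def by auto
  then have "(\<Sum>j\<in>H - Mi. g j) = (\<Sum>j\<in>R \<inter> H. g j)"
    using \<open>finite R\<close> by (simp add: R_def g_def)
  then have g_split: "(\<Sum>j\<in>H. g j) = (\<Sum>j\<in>Mi \<inter> H. g j) + (\<Sum>j\<in>R \<inter> H. g j)"
    using sum.Int_Diff[OF \<open>finite H\<close>, of g Mi] by (simp add: inf.commute)
  have "(Mi \<union> R) - H \<subseteq> {1..n} - H" using Mi_sub unfolding R_def by auto
  then have "card ((Mi \<union> R) - H) \<le> card ({1..n} - H)" by (rule card_mono[rotated]) simp
  then have "card ((Mi \<union> R) - H) \<le> card R" using F_card \<open>card R = f\<close> by simp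
  then have "card (Mi - H) \<le> card (R \<inter> H)"
    using \<open>finite Mi\<close> \<open>finite R\<close> by (rule card_Diff_le_card_Int_if_disjoint[rotated 3])
      (auto simp: R_def)
  moreover have "\<forall>j\<in>Mi - H. \<forall>l\<in>R \<inter> H. norm (xs i - r j) \<le> norm (e i - e l)"
  proof (intro ballI)
    fix j l assume "j \<in> Mi - H" and "l \<in> R \<inter> H"
    then show "norm (xs i - r j) \<le> norm (e i - e l)"
      using dominated r_eq[of l] by (force simp: e_def)
  qed
  ultimately have byz: "- 2 * real (card (R \<inter> H)) * (norm (e i))\<^sup>2
      \<le> (\<Sum>j\<in>Mi - H. inner (e i) (xs i - r j)) - (\<Sum>j\<in>R \<inter> H. g j)"
    unfolding g_def using \<open>finite Mi\<close> \<open>finite R\<close> by (intro byzantine_terms_lower_bound) auto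
  have "card (R \<inter> H) \<le> f"
    using card_mono[OF \<open>finite R\<close>, of "R \<inter> H"] \<open>card R = f\<close> by auto
  then have byz_budget: "real (card (R \<inter> H)) * (norm (e i))\<^sup>2 \<le> real f * (norm (e i))\<^sup>2"
    by (intro mult_right_mono) auto
  have far: "\<mu>\<^sup>2 * (real k + 1 - 2 * real f) * (norm (e i))\<^sup>2
      \<le> (\<Sum>j\<in>Mi \<inter> H. (norm (xs i - xs j))\<^sup>2)"
    unfolding e_def using far_terms_lower_bound[OF H_sub F_card \<open>i \<in> H\<close> trim near \<open>\<mu> > 0\<close>] .
  have "(\<mu>\<^sup>2 / 2 * (real k + 1 - 2 * real f) - 2 * real f) * (norm (e i))\<^sup>2
      = \<mu>\<^sup>2 * (real k + 1 - 2 * real f) * (norm (e i))\<^sup>2 / 2 - 2 * (real f * (norm (e i))\<^sup>2)"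
    by (simp add: algebra_simps)
  then show ?thesis
    using phi_eq g_split byz byz_budget far unfolding g_def e_def by linarith
qed

lemma k_redundant_less_if_singleton:
  fixes X :: "nat \<Rightarrow> 'a::perfect_space set"
  assumes "k_redundant n H X k" and "(\<Inter>i\<in>H. X i) = {xstar}"
  shows "k < n"
proof (rule ccontr)
  assume "\<not> k < n"
  (* then even the empty family is large enough, and its intersection is UNIV *)
  then have "(\<Inter>i\<in>{}. X i) = (\<Inter>i\<in>H. X i)"
    using assms(1)[unfolded k_redundant_def, rule_format, of "{}"] by simp
  then have "UNIV = {xstar}" using assms(2) by simp
  then show False using UNIV_not_singleton by blast
qed

lemma card_near_points_less:
  fixes X :: "nat \<Rightarrow> 'a::metric_space set" and p :: "nat \<Rightarrow> 'a"
  assumes "finite H" and p_in: "\<forall>j\<in>H. p j \<in> X j"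
    and redundant: "k_redundant n H X k" and unique: "(\<Inter>i\<in>H. X i) = {xstar}" and "k < n"
    and mu_bound: "\<forall>S. S \<subseteq> H \<and> card S \<ge> n - k \<longrightarrow>
        (MAX i\<in>S. infdist y (X i)) \<ge> \<mu> * infdist y (\<Inter>i\<in>S. X i)"
  shows "card {j\<in>H. dist y (p j) < \<mu> * dist y xstar} < n - k"
proof (rule ccontr)
  define C where "C = {j\<in>H. dist y (p j) < \<mu> * dist y xstar}"
  assume "\<not> ?thesis"
  then have "card C \<ge> n - k" unfolding C_def by simp
  moreover have "C \<subseteq> H" unfolding C_def by auto
  ultimately have "\<mu> * infdist y (\<Inter>i\<in>C. X i) \<le> (MAX i\<in>C. infdist y (X i))"
    and "(\<Inter>i\<in>C. X i) = {xstar}"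
    using mu_bound[rule_format, of C] redundant[unfolded k_redundant_def, rule_format, of C] unique
    by auto
  then have ge: "\<mu> * dist y xstar \<le> (MAX i\<in>C. infdist y (X i))" by simp
  have "\<forall>j\<in>C. infdist y (X j) < \<mu> * dist y xstar"
    using infdist_le[of _ _ y] p_in unfolding C_def by force
  moreover have "finite C" using \<open>finite H\<close> \<open>C \<subseteq> H\<close> finite_subset by blast
  moreover have "C \<noteq> {}" using \<open>card C \<ge> n - k\<close> \<open>k < n\<close> by auto
  ultimately have "(MAX i\<in>C. infdist y (X i)) < \<mu> * dist y xstar" by simp
  then show False using ge by linarith
qed

lemma projected_iterates_in_sets:
  fixes X :: "nat \<Rightarrow> 'a::euclidean_space set"
  assumes "\<forall>i\<in>H. closed (X i)" and "\<forall>i\<in>H. X i \<noteq> {}" and "\<forall>i\<in>H. x 0 i \<in> X i"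
    and "\<forall>t. \<forall>i\<in>H. x (Suc t) i = proj (X i) (z t i)"
  shows "\<forall>i\<in>H. x t i \<in> X i"
  using assms by (cases t) (simp_all add: proj_def closest_point_in_set)

theorem lemma3:
  fixes n f k :: nat
    and H :: "nat set"
    and X :: "nat \<Rightarrow> 'a::euclidean_space set"
    and x :: "nat \<Rightarrow> nat \<Rightarrow> 'a"
    and recv :: "nat \<Rightarrow> nat \<Rightarrow> nat \<Rightarrow> 'a"
    and M :: "nat \<Rightarrow> nat \<Rightarrow> nat set"
    and \<alpha> \<mu> :: real
    and xstar :: 'a
  assumes H_sub: "H \<subseteq> {1..n}"
    and F_card: "card ({1..n} - H) \<le> f"
    and X_closed: "\<forall>i\<in>H. closed (X i)"
    and X_convex: "\<forall>i\<in>H. convex (X i)"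
    and init: "\<forall>i\<in>H. x 0 i \<in> X i"
    and alpha_pos: "\<alpha> > 0"
    and recv_normal: "\<forall>t. \<forall>i\<in>H. \<forall>j\<in>H. j \<noteq> i \<longrightarrow> recv t j i = x t j"
    and trim: "\<forall>t. \<forall>i\<in>H. trimmed_set n f i (x t i) (\<lambda>j. recv t j i) (M t i)"
    and update: "\<forall>t. \<forall>i\<in>H.
        x (Suc t) i = proj (X i) (x t i + \<alpha> *\<^sub>R (\<Sum>j\<in>M t i. recv t j i - x t i))"
    and unique: "(\<Inter>i\<in>H. X i) = {xstar}"
    and redundant: "k_redundant n H X k"
    and mu_pos: "\<mu> > 0"
    and mu_bound: "\<forall>(y::'a) S. S \<subseteq> H \<and> card S \<ge> n - k \<longrightarrow>
        (MAX i\<in>S. infdist y (X i)) \<ge> \<mu> * infdist y (\<Inter>i\<in>S. X i)"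
    and k_large: "real k > 4 * real f / \<mu>^2 + (2 * real f - 1)"
  shows "\<forall>t. (\<Sum>i\<in>H. phi xstar (x t i) (\<lambda>j. recv t j i) (M t i))
          \<ge> (\<mu>^2 / 2 * real k - (4 * real f + 2 * real f * \<mu>^2 - \<mu>^2) / 2)
             * Vfun xstar H (x t)"
proof
  fix t
  define c where "c = \<mu>\<^sup>2 / 2 * (real k + 1 - 2 * real f) - 2 * real f"
  have "finite H" using H_sub finite_subset by blast
  have "\<forall>i\<in>H. X i \<noteq> {}" using unique by auto
  then have states: "\<forall>i\<in>H. x t i \<in> X i"
    using projected_iterates_in_sets[OF X_closed _ init update] by blast
  have "k < n" using redundant unique by (rule k_redundant_less_if_singleton)
  have "(\<Sum>j\<in>H. (norm (x t i - xstar))\<^sup>2 / 2 - (norm (x t j - xstar))\<^sup>2 / 2)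
      + c * (norm (x t i - xstar))\<^sup>2 \<le> phi xstar (x t i) (\<lambda>j. recv t j i) (M t i)"
    if "i \<in> H" for i
    unfolding c_def
  proof (rule phi_lower_bound[OF H_sub F_card that _ _ _ mu_pos])
    show "\<forall>j\<in>H. j \<noteq> i \<longrightarrow> recv t j i = x t j" using recv_normal that by blast
    show "trimmed_set n f i (x t i) (\<lambda>j. recv t j i) (M t i)" using trim that by blast
    show "card {j\<in>H. norm (x t i - x t j) < \<mu> * norm (x t i - xstar)} < n - k"
      using card_near_points_less[OF \<open>finite H\<close> states redundant unique \<open>k < n\<close> spec[OF mu_bound]]
      by (simp add: dist_norm)
  qed
  then have "(\<Sum>i\<in>H. \<Sum>j\<in>H. (norm (x t i - xstar))\<^sup>2 / 2 - (norm (x t j - xstar))\<^sup>2 / 2)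
      + c * Vfun xstar H (x t) \<le> (\<Sum>i\<in>H. phi xstar (x t i) (\<lambda>j. recv t j i) (M t i))"
    unfolding Vfun_def sum_distrib_left sum.distrib[symmetric] by (rule sum_mono)
  moreover have "c = \<mu>\<^sup>2 / 2 * real k - (4 * real f + 2 * real f * \<mu>\<^sup>2 - \<mu>\<^sup>2) / 2"
    unfolding c_def by (simp add: field_simps)
  ultimately show "(\<Sum>i\<in>H. phi xstar (x t i) (\<lambda>j. recv t j i) (M t i))
      \<ge> (\<mu>^2 / 2 * real k - (4 * real f + 2 * real f * \<mu>^2 - \<mu>^2) / 2) * Vfun xstar H (x t)"
    using sum_sum_diff_eq_zero[of "\<lambda>i. (norm (x t i - xstar))\<^sup>2 / 2" H] by simp
qed

end
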